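(* Let $\mathbf{B}$ be a 2-element algebra with universe $\{0,1\}$ such that $\mathrm{Clo}(\mathbf{B})=\mathsf{U}$, and let $\mathbf{A}=\mathbf{B}^n$. Then any algorithm (classical or quantum) solving $\mathrm{HKP}(\mathbf{A})$ must make $\Omega(2^n)$ queries to the oracle.
   Context: $\mathrm{Clo}(\mathbf{B})$ is the clone of term operations of $\mathbf{B}$ (smallest set of operations on $\{0,1\}$ containing the basic operations and projections, closed under composition). $\mathsf{U}$ is the clone generated by $\neg x$ and the constant $0$. $\mathbf{B}^n$ is the direct power with coordinatewise operations. A congruence is an equivalence relation compatible with all operations; $\ker(\phi)=\{(a,b):\phi(a)=\phi(b)\}$. The Hidden Kernel Problem $\mathrm{HKP}(\mathbf{A})$: given a similar algebra $\mathbf{C}$ and a homomorphism $\phi:\mathbf{A}\to\mathbf{C}$ accessible only as an oracle, determine the congruence $\ker(\phi)$. *)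

theory Defs
  imports "HOL-Probability.Probability_Mass_Function"
begin

text \<open>A signature is given by an index type 'i and an arity function ar.
  An algebra of this signature with elements of type 'a is a carrier set
  together with a family of operations 'i => 'a list => 'a (operation s is
  only meaningful on argument lists of length ar s).\<close>

definition is_algebra :: "('i \<Rightarrow> nat) \<Rightarrow> 'a set \<Rightarrow> ('i \<Rightarrow> 'a list \<Rightarrow> 'a) \<Rightarrow> bool" where
  "is_algebra ar C opC \<longleftrightarrow> C \<noteq> {} \<and>
     (\<forall>s cs. length cs = ar s \<and> set cs \<subseteq> C \<longrightarrow> opC s cs \<in> C)"

definition alg_hom :: "('i \<Rightarrow> nat) \<Rightarrow> 'a set \<Rightarrow> ('i \<Rightarrow> 'a list \<Rightarrow> 'a)
     \<Rightarrow> 'c set \<Rightarrow> ('i \<Rightarrow> 'c list \<Rightarrow> 'c) \<Rightarrow> ('a \<Rightarrow> 'c) \<Rightarrow> bool" where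
  "alg_hom ar A opA C opC \<phi> \<longleftrightarrow> (\<forall>a\<in>A. \<phi> a \<in> C) \<and>
     (\<forall>s as. length as = ar s \<and> set as \<subseteq> A \<longrightarrow> \<phi> (opA s as) = opC s (map \<phi> as))"

definition ker_on :: "'a set \<Rightarrow> ('a \<Rightarrow> 'c) \<Rightarrow> ('a \<times> 'a) set" where
  "ker_on A \<phi> = {(a, b). a \<in> A \<and> b \<in> A \<and> \<phi> a = \<phi> b}"

section \<open>Clones on {0,1} (0 = False, 1 = True)\<close>

text \<open>Operations on {0,1} are functions bool list => bool; a k-ary operation
  is only considered on argument lists of length k.  in_clone F k f: f is a
  k-ary operation of the clone generated by the set F of (arity, operation)
  pairs, built from projections by composition with members of F.\<close>

inductive in_clone :: "(nat \<times> (bool list \<Rightarrow> bool)) set \<Rightarrow> nat \<Rightarrow> (bool list \<Rightarrow> bool) \<Rightarrow> bool"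
  for F :: "(nat \<times> (bool list \<Rightarrow> bool)) set" where
  proj: "i < k \<Longrightarrow> in_clone F k (\<lambda>xs. xs ! i)"
| comp: "(m, g) \<in> F \<Longrightarrow> length hs = m \<Longrightarrow> (\<forall>h\<in>set hs. in_clone F k h)
         \<Longrightarrow> in_clone F k (\<lambda>xs. g (map (\<lambda>h. h xs) hs))"

definition clone_part :: "(nat \<times> (bool list \<Rightarrow> bool)) set \<Rightarrow> nat \<Rightarrow> (bool list \<Rightarrow> bool) set" where
  "clone_part F k = {f. \<exists>g. in_clone F k g \<and> (\<forall>xs. length xs = k \<longrightarrow> f xs = g xs)}"

definition basic_ops :: "('i \<Rightarrow> nat) \<Rightarrow> ('i \<Rightarrow> bool list \<Rightarrow> bool) \<Rightarrow> (nat \<times> (bool list \<Rightarrow> bool)) set" where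
  "basic_ops ar opB = range (\<lambda>s. (ar s, opB s))"

definition U_gens :: "(nat \<times> (bool list \<Rightarrow> bool)) set" where
  "U_gens = {(1, \<lambda>xs. \<not> hd xs), (1, \<lambda>xs. False)}"

text \<open>Clo(B) = U, compared in all positive arities.\<close>
definition Clo_eq_U :: "('i \<Rightarrow> nat) \<Rightarrow> ('i \<Rightarrow> bool list \<Rightarrow> bool) \<Rightarrow> bool" where
  "Clo_eq_U ar opB \<longleftrightarrow> (\<forall>k\<ge>1. clone_part (basic_ops ar opB) k = clone_part U_gens k)"

definition pow_carrier :: "nat \<Rightarrow> bool list set" where
  "pow_carrier n = {xs. length xs = n}"

definition pow_ops :: "nat \<Rightarrow> ('i \<Rightarrow> bool list \<Rightarrow> bool) \<Rightarrow> 'i \<Rightarrow> bool list list \<Rightarrow> bool list" where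
  "pow_ops n opB s vs = map (\<lambda>j. opB s (map (\<lambda>v. v ! j) vs)) [0..<n]"

text \<open>Instances of HKP(B^n) whose target algebra C has its elements encoded
  by natural numbers below M (C given by carrier and operations).\<close>
definition hkp_instance :: "('i \<Rightarrow> nat) \<Rightarrow> ('i \<Rightarrow> bool list \<Rightarrow> bool) \<Rightarrow> nat \<Rightarrow> nat
     \<Rightarrow> nat set \<Rightarrow> ('i \<Rightarrow> nat list \<Rightarrow> nat) \<Rightarrow> (bool list \<Rightarrow> nat) \<Rightarrow> bool" where
  "hkp_instance ar opB n M C opC \<phi> \<longleftrightarrow> C \<subseteq> {..<M} \<and> is_algebra ar C opC \<and>
     alg_hom ar (pow_carrier n) (pow_ops n opB) C opC \<phi>"

datatype dtree = Leaf "(bool list \<times> bool list) set" | Query "bool list" "nat \<Rightarrow> dtree"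

primrec run_tree :: "(bool list \<Rightarrow> nat) \<Rightarrow> dtree \<Rightarrow> (bool list \<times> bool list) set" where
  "run_tree \<phi> (Leaf r) = r"
| "run_tree \<phi> (Query a t) = run_tree \<phi> (t (\<phi> a))"

primrec nqueries :: "(bool list \<Rightarrow> nat) \<Rightarrow> dtree \<Rightarrow> nat" where
  "nqueries \<phi> (Leaf r) = 0"
| "nqueries \<phi> (Query a t) = Suc (nqueries \<phi> (t (\<phi> a)))"

text \<open>A randomized classical algorithm (a probability distribution over
  decision trees, which may depend on the given algebra C) solves HKP(B^n)
  with at most q queries and success probability at least 2/3.\<close>
definition solves_hkp_classical :: "('i \<Rightarrow> nat) \<Rightarrow> ('i \<Rightarrow> bool list \<Rightarrow> bool) \<Rightarrow> nat \<Rightarrow> nat \<Rightarrow> nat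
     \<Rightarrow> (nat set \<Rightarrow> ('i \<Rightarrow> nat list \<Rightarrow> nat) \<Rightarrow> dtree pmf) \<Rightarrow> bool" where
  "solves_hkp_classical ar opB n M q R \<longleftrightarrow>
     (\<forall>C opC \<phi>. hkp_instance ar opB n M C opC \<phi> \<longrightarrow>
        (\<forall>t\<in>set_pmf (R C opC). nqueries \<phi> t \<le> q) \<and>
        measure_pmf.prob (R C opC) {t. run_tree \<phi> t = ker_on (pow_carrier n) \<phi>} \<ge> 2/3)"

text \<open>Basis states: (query input a in A, answer register y < M, workspace w < d).
  States are complex amplitude functions on the basis; operators are kernels
  K i j (matrix entries) on the finite basis.\<close>
type_synonym qbasis = "bool list \<times> nat \<times> nat"

definition qbasis_set :: "nat \<Rightarrow> nat \<Rightarrow> nat \<Rightarrow> qbasis set" where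
  "qbasis_set n M d = pow_carrier n \<times> {..<M} \<times> {..<d}"

definition unitary_on :: "qbasis set \<Rightarrow> (qbasis \<Rightarrow> qbasis \<Rightarrow> complex) \<Rightarrow> bool" where
  "unitary_on S K \<longleftrightarrow> (\<forall>i\<in>S. \<forall>j\<in>S. (\<Sum>k\<in>S. cnj (K k i) * K k j) = (if i = j then 1 else 0))"

definition apply_op :: "qbasis set \<Rightarrow> (qbasis \<Rightarrow> qbasis \<Rightarrow> complex) \<Rightarrow> (qbasis \<Rightarrow> complex) \<Rightarrow> (qbasis \<Rightarrow> complex)" where
  "apply_op S K \<psi> = (\<lambda>i. if i \<in> S then (\<Sum>j\<in>S. K i j * \<psi> j) else 0)"

text \<open>The query operator: |a, y, w> maps to |a, (y + phi a) mod M, w>.\<close>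
definition query_op :: "nat \<Rightarrow> (bool list \<Rightarrow> nat) \<Rightarrow> (qbasis \<Rightarrow> complex) \<Rightarrow> (qbasis \<Rightarrow> complex)" where
  "query_op M \<phi> \<psi> = (\<lambda>(a, y, w). \<psi> (a, (y + (M - \<phi> a mod M)) mod M, w))"

text \<open>qrun [U0, U1, ..., Uq] psi = Uq O ... U1 O U0 psi  (q oracle calls).\<close>
fun qrun :: "qbasis set \<Rightarrow> nat \<Rightarrow> (bool list \<Rightarrow> nat) \<Rightarrow> (qbasis \<Rightarrow> qbasis \<Rightarrow> complex) list
     \<Rightarrow> (qbasis \<Rightarrow> complex) \<Rightarrow> (qbasis \<Rightarrow> complex)" where
  "qrun S M \<phi> [] \<psi> = \<psi>"
| "qrun S M \<phi> [U] \<psi> = apply_op S U \<psi>"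
| "qrun S M \<phi> (U # V # Us) \<psi> = qrun S M \<phi> (V # Us) (query_op M \<phi> (apply_op S U \<psi>))"

definition init_state :: "nat \<Rightarrow> qbasis \<Rightarrow> complex" where
  "init_state n = (\<lambda>s. if s = (replicate n False, 0, 0) then 1 else 0)"

text \<open>A quantum query algorithm: workspace dimension d (at least 1), a list of
  q+1 unitaries, and an output assigned to each measured basis state.\<close>
type_synonym qalg = "nat \<times> (qbasis \<Rightarrow> qbasis \<Rightarrow> complex) list \<times> (qbasis \<Rightarrow> (bool list \<times> bool list) set)"

definition qalg_wf :: "nat \<Rightarrow> nat \<Rightarrow> nat \<Rightarrow> qalg \<Rightarrow> bool" where
  "qalg_wf n M q Q = (case Q of (d, Us, out) \<Rightarrow>
     d \<ge> 1 \<and> length Us = Suc q \<and> (\<forall>U\<in>set Us. unitary_on (qbasis_set n M d) U))"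

definition qsuccess :: "nat \<Rightarrow> nat \<Rightarrow> qalg \<Rightarrow> (bool list \<Rightarrow> nat) \<Rightarrow> (bool list \<times> bool list) set \<Rightarrow> real" where
  "qsuccess n M Q \<phi> target = (case Q of (d, Us, out) \<Rightarrow>
     (let S = qbasis_set n M d; \<psi> = qrun S M \<phi> Us (init_state n)
      in \<Sum>s\<in>{s\<in>S. out s = target}. (cmod (\<psi> s))\<^sup>2))"

definition solves_hkp_quantum :: "('i \<Rightarrow> nat) \<Rightarrow> ('i \<Rightarrow> bool list \<Rightarrow> bool) \<Rightarrow> nat \<Rightarrow> nat \<Rightarrow> nat
     \<Rightarrow> (nat set \<Rightarrow> ('i \<Rightarrow> nat list \<Rightarrow> nat) \<Rightarrow> qalg) \<Rightarrow> bool" where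
  "solves_hkp_quantum ar opB n M q Q \<longleftrightarrow>
     (\<forall>C opC \<phi>. hkp_instance ar opB n M C opC \<phi> \<longrightarrow>
        qalg_wf n M q (Q C opC) \<and>
        qsuccess n M (Q C opC) \<phi> (ker_on (pow_carrier n) \<phi>) \<ge> 2/3)"

end

(*
  If Clo(B) = U, every basic operation of B is a constant, a projection or a negated
  projection.  Hence every x : B^n -> {0,1} with x(0...0) = 0 and x(not a) = not x(a) is a
  homomorphism onto B, and distinct such x have distinct kernels.  Choosing x freely on one
  vector of each complementary pair gives 2^(2^(n-1) - 1) instances of HKP(B^n) with the same
  target algebra, and an algorithm solving all of them must tell these oracles apart from
  one-bit answers.

  A classical decision tree making q queries has at most 2^q outputs.  After q queries the
  amplitudes of a quantum algorithm are polynomials of degree at most q in the 2^n oracle bits,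
  so all final states lie in a space of dimension at most sum_{j<=q} (2^n choose j), which is
  at most 8^q (9/8)^(2^n); the total success probability over the family is bounded by that
  dimension.  Comparing either bound with (2/3) 2^(2^(n-1) - 1) gives q >= 2^n / 12
  for n >= 5.
*)
theory Submission
  imports Defs "HOL-Analysis.Convex"
begin

section \<open>The clone U\<close>

definition U_operation :: "nat \<Rightarrow> (bool list \<Rightarrow> bool) \<Rightarrow> bool" where
  "U_operation k g \<longleftrightarrow>
     (\<exists>b. \<forall>xs. length xs = k \<longrightarrow> g xs = b) \<or>
     (\<exists>i<k. \<forall>xs. length xs = k \<longrightarrow> g xs = xs ! i) \<or>
     (\<exists>i<k. \<forall>xs. length xs = k \<longrightarrow> g xs = (\<not> xs ! i))"

lemma in_clone_U_gens_imp_U_operation: "in_clone U_gens k g \<Longrightarrow> U_operation k g"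
proof (induction rule: in_clone.induct)
  case (proj i k)
  then show ?case unfolding U_operation_def by blast
next
  case (comp m g hs k)
  then consider "g = (\<lambda>xs. \<not> hd xs)" "hs \<noteq> []" "tl hs = []" | "g = (\<lambda>xs. False)"
    unfolding U_gens_def by (cases hs) auto
  then show ?case
  proof cases
    case 1
    then have "U_operation k (hd hs)" using comp.IH by simp
    with 1 show ?thesis unfolding U_operation_def by (cases hs) auto
  qed (auto simp: U_operation_def)
qed

lemma basic_op_in_clone_part: "opB s \<in> clone_part (basic_ops ar opB) (ar s)"
proof -
  let ?projs = "map (\<lambda>i xs. xs ! i) [0..<ar s]"
  have "in_clone (basic_ops ar opB) (ar s) (\<lambda>xs. opB s (map (\<lambda>h. h xs) ?projs))"
    by (rule in_clone.comp) (auto simp: basic_ops_def intro: in_clone.proj)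
  moreover have "opB s xs = opB s (map (\<lambda>h. h xs) ?projs)" if "length xs = ar s" for xs
    using that[symmetric] by (simp add: comp_def map_nth)
  ultimately show ?thesis unfolding clone_part_def by blast
qed

lemma U_operation_cong:
  "(\<And>xs. length xs = k \<Longrightarrow> f xs = g xs) \<Longrightarrow> U_operation k f = U_operation k g"
  unfolding U_operation_def by simp

lemma Clo_eq_U_imp_U_operation:
  assumes "Clo_eq_U ar opB"
  shows "U_operation (ar s) (opB s)"
proof (cases "ar s = 0")
  case True
  (* Clo_eq_U compares positive arities only; a nullary operation is a constant anyway *)
  then show ?thesis unfolding U_operation_def by (metis length_0_conv)
next
  case False
  then have "clone_part (basic_ops ar opB) (ar s) = clone_part U_gens (ar s)"
    using assms unfolding Clo_eq_U_def by simp
  then have "opB s \<in> clone_part U_gens (ar s)"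
    using basic_op_in_clone_part[of opB s ar] by simp
  then obtain g where "in_clone U_gens (ar s) g" "\<forall>xs. length xs = ar s \<longrightarrow> opB s xs = g xs"
    unfolding clone_part_def by blast
  then show ?thesis using in_clone_U_gens_imp_U_operation U_operation_cong by metis
qed

section \<open>Self-dual oracles\<close>

lemma finite_pow_carrier: "finite (pow_carrier n)"
  using finite_lists_length_eq[of "UNIV :: bool set" n] by (simp add: pow_carrier_def)

lemma card_pow_carrier: "card (pow_carrier n) = 2 ^ n"
  using card_lists_length_eq[of "UNIV :: bool set" n] by (simp add: pow_carrier_def)

lemma replicate_in_pow_carrier: "replicate n b \<in> pow_carrier n"
  by (simp add: pow_carrier_def)

definition self_dual :: "nat \<Rightarrow> (bool list \<Rightarrow> bool) \<Rightarrow> bool" where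
  "self_dual n x \<longleftrightarrow> (\<forall>a. x a \<longrightarrow> a \<in> pow_carrier n) \<and> \<not> x (replicate n False) \<and>
     (\<forall>a\<in>pow_carrier n. x (map Not a) = (\<not> x a))"

lemma self_dual_replicate_True:
  assumes "self_dual n x" shows "x (replicate n True)"
proof -
  have "x (map Not (replicate n False)) = (\<not> x (replicate n False))"
    using assms replicate_in_pow_carrier unfolding self_dual_def by blast
  moreover have "\<not> x (replicate n False)" using assms by (simp add: self_dual_def)
  ultimately show ?thesis by simp
qed

lemma self_dual_pow_op:
  assumes g: "U_operation k g" and x: "self_dual n x"
    and vs: "length vs = k" "set vs \<subseteq> pow_carrier n"
  shows "x (map (\<lambda>j. g (map (\<lambda>v. v ! j) vs)) [0..<n]) = g (map x vs)"
  using g unfolding U_operation_def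
proof (elim disjE exE conjE)
  fix b assume gb: "\<forall>xs. length xs = k \<longrightarrow> g xs = b"
  have "map (\<lambda>j. g (map (\<lambda>v. v ! j) vs)) [0..<n] = replicate n b"
    by (rule nth_equalityI) (simp_all add: gb vs)
  moreover have "g (map x vs) = b" by (simp add: gb vs)
  ultimately show ?thesis using x self_dual_replicate_True by (cases b) (auto simp: self_dual_def)
next
  fix i assume i: "i < k" and gi: "\<forall>xs. length xs = k \<longrightarrow> g xs = xs ! i"
  have "vs ! i \<in> pow_carrier n" using i vs by auto
  then have vi: "length (vs ! i) = n" by (simp add: pow_carrier_def)
  have "map (\<lambda>j. g (map (\<lambda>v. v ! j) vs)) [0..<n] = vs ! i"
    by (rule nth_equalityI) (simp_all add: gi vs vi i)
  then show ?thesis by (simp add: gi vs i)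
next
  fix i assume i: "i < k" and gi: "\<forall>xs. length xs = k \<longrightarrow> g xs = (\<not> xs ! i)"
  have vi: "vs ! i \<in> pow_carrier n" using i vs by auto
  have "map (\<lambda>j. g (map (\<lambda>v. v ! j) vs)) [0..<n] = map Not (vs ! i)"
    by (rule nth_equalityI) (use vi in \<open>simp_all add: gi vs i pow_carrier_def\<close>)
  then show ?thesis using x vi by (simp add: gi vs i self_dual_def)
qed

(* B itself, its universe encoded as the set {0, 1} of naturals required of target algebras *)
definition bit_ops :: "('i \<Rightarrow> bool list \<Rightarrow> bool) \<Rightarrow> 'i \<Rightarrow> nat list \<Rightarrow> nat" where
  "bit_ops opB s cs = of_bool (opB s (map (\<lambda>c. c = 1) cs))"

definition bit_oracle :: "(bool list \<Rightarrow> bool) \<Rightarrow> bool list \<Rightarrow> nat" where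
  "bit_oracle x a = of_bool (x a)"

lemma hkp_instance_self_dual:
  assumes U: "Clo_eq_U ar opB" and x: "self_dual n x" and M: "M \<ge> 2"
  shows "hkp_instance ar opB n M {0, 1} (bit_ops opB) (bit_oracle x)"
  unfolding hkp_instance_def
proof (intro conjI)
  show "{0, 1} \<subseteq> {..<M}" using M by auto
  show "is_algebra ar {0, 1} (bit_ops opB)" by (simp add: is_algebra_def bit_ops_def)
  have "bit_oracle x (pow_ops n opB s vs) = bit_ops opB s (map (bit_oracle x) vs)"
    if "length vs = ar s" "set vs \<subseteq> pow_carrier n" for s vs
  proof -
    have "map (\<lambda>c. c = 1) (map (bit_oracle x) vs) = map x vs" by (simp add: bit_oracle_def)
    then have "bit_ops opB s (map (bit_oracle x) vs) = of_bool (opB s (map x vs))"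
      by (simp only: bit_ops_def)
    then show ?thesis
      using self_dual_pow_op[OF Clo_eq_U_imp_U_operation[OF U] x that]
      by (simp add: bit_oracle_def pow_ops_def)
  qed
  then show "alg_hom ar (pow_carrier n) (pow_ops n opB) {0, 1} (bit_ops opB) (bit_oracle x)"
    by (simp add: alg_hom_def bit_oracle_def)
qed

lemma inj_on_ker_bit_oracle:
  "inj_on (\<lambda>x. ker_on (pow_carrier n) (bit_oracle x)) {x. self_dual n x}"
proof (rule inj_onI, rule ext)
  have recover: "x a \<longleftrightarrow> a \<in> pow_carrier n \<and>
      (a, replicate n False) \<notin> ker_on (pow_carrier n) (bit_oracle x)" if "self_dual n x" for x a
    using that replicate_in_pow_carrier[of n False]
    by (auto simp: self_dual_def ker_on_def bit_oracle_def)
  fix x x' a assume "x \<in> {x. self_dual n x}" "x' \<in> {x. self_dual n x}"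
    and "ker_on (pow_carrier n) (bit_oracle x) = ker_on (pow_carrier n) (bit_oracle x')"
  then show "x a = x' a" using recover[of x a] recover[of x' a] by simp
qed

(* Z is the set of tails t with x (False # t); the values on True # t are then forced by
   self-duality.  Keeping the zero tail out of Z gives x (0...0) = False, and the other
   2^m - 1 tails are free. *)
definition self_dual_extension :: "nat \<Rightarrow> bool list set \<Rightarrow> bool list \<Rightarrow> bool" where
  "self_dual_extension m Z a \<longleftrightarrow> length a = Suc m \<and>
     (case a of [] \<Rightarrow> False | b # t \<Rightarrow> if b then map Not t \<notin> Z else t \<in> Z)"

definition hard_family :: "nat \<Rightarrow> (bool list \<Rightarrow> bool) set" where
  "hard_family m = self_dual_extension m ` Pow (pow_carrier m - {replicate m False})"

lemma self_dual_self_dual_extension: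
  assumes Z: "Z \<subseteq> pow_carrier m - {replicate m False}"
  shows "self_dual (Suc m) (self_dual_extension m Z)"
  unfolding self_dual_def
proof (intro conjI allI impI ballI)
  fix a assume "a \<in> pow_carrier (Suc m)"
  then obtain b t where "a = b # t" "length t = m" by (cases a) (auto simp: pow_carrier_def)
  then show "self_dual_extension m Z (map Not a) = (\<not> self_dual_extension m Z a)"
    by (cases b) (auto simp: self_dual_extension_def comp_def)
next
  fix a assume "self_dual_extension m Z a"
  then show "a \<in> pow_carrier (Suc m)" by (simp add: self_dual_extension_def pow_carrier_def)
next
  have "replicate m False \<notin> Z" using Z by blast
  then show "\<not> self_dual_extension m Z (replicate (Suc m) False)"
    by (simp add: self_dual_extension_def)
qed

lemma self_dual_extension_Cons_False:
  "Z \<subseteq> pow_carrier m \<Longrightarrow> self_dual_extension m Z (False # t) \<longleftrightarrow> t \<in> Z"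
  by (auto simp: self_dual_extension_def pow_carrier_def)

lemma finite_hard_family: "finite (hard_family m)"
  by (simp add: hard_family_def finite_pow_carrier)

lemma card_hard_family: "card (hard_family m) = 2 ^ (2 ^ m - 1)"
proof -
  have "inj_on (self_dual_extension m) (Pow (pow_carrier m - {replicate m False}))"
  proof (rule inj_onI, rule set_eqI)
    fix Z Z' t
    assume "Z \<in> Pow (pow_carrier m - {replicate m False})" "Z' \<in> Pow (pow_carrier m - {replicate m False})"
      and "self_dual_extension m Z = self_dual_extension m Z'"
    then show "t \<in> Z \<longleftrightarrow> t \<in> Z'"
      using self_dual_extension_Cons_False[of Z m t] self_dual_extension_Cons_False[of Z' m t] by auto
  qed
  then have "card (hard_family m) = 2 ^ card (pow_carrier m - {replicate m False})"
    by (simp add: hard_family_def card_image card_Pow finite_pow_carrier)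
  also have "card (pow_carrier m - {replicate m False}) = 2 ^ m - 1"
    by (simp add: card_Diff_singleton card_pow_carrier replicate_in_pow_carrier)
  finally show ?thesis .
qed

lemma hard_family_self_dual: "x \<in> hard_family m \<Longrightarrow> self_dual (Suc m) x"
  unfolding hard_family_def using self_dual_self_dual_extension by blast

section \<open>Classical query algorithms\<close>

definition tree_outputs :: "dtree \<Rightarrow> nat \<Rightarrow> (bool list \<times> bool list) set set" where
  "tree_outputs t q = {run_tree \<phi> t |\<phi>. range \<phi> \<subseteq> {0, 1} \<and> nqueries \<phi> t \<le> q}"

lemma tree_outputs_Query:
  "tree_outputs (Query a f) q \<subseteq> tree_outputs (f 0) (q - 1) \<union> tree_outputs (f 1) (q - 1)"
proof
  fix r assume "r \<in> tree_outputs (Query a f) q"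
  then obtain \<phi> where \<phi>: "range \<phi> \<subseteq> {0, 1}" "nqueries \<phi> (f (\<phi> a)) \<le> q - 1"
    and r: "r = run_tree \<phi> (f (\<phi> a))"
    by (auto simp: tree_outputs_def)
  then have "r \<in> tree_outputs (f (\<phi> a)) (q - 1)" unfolding tree_outputs_def by blast
  moreover have "\<phi> a \<in> {0, 1}" using \<phi>(1) by auto
  ultimately show "r \<in> tree_outputs (f 0) (q - 1) \<union> tree_outputs (f 1) (q - 1)" by auto
qed

lemma finite_card_tree_outputs: "finite (tree_outputs t q) \<and> card (tree_outputs t q) \<le> 2 ^ q"
proof (induction t arbitrary: q)
  case (Leaf r)
  have sub: "tree_outputs (Leaf r) q \<subseteq> {r}" by (auto simp: tree_outputs_def)
  then have "card (tree_outputs (Leaf r) q) \<le> 1" using card_mono[OF _ sub] by simp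
  then show ?case using finite_subset[OF sub] by (simp add: order_trans[OF _ one_le_power])
next
  case (Query a f)
  show ?case
  proof (cases q)
    case 0
    then have "tree_outputs (Query a f) q = {}" by (auto simp: tree_outputs_def)
    then show ?thesis by simp
  next
    case (Suc q')
    have IH: "finite (tree_outputs (f b) q') \<and> card (tree_outputs (f b) q') \<le> 2 ^ q'" for b
      using Query.IH[of "f b" q'] by simp
    have "card (tree_outputs (Query a f) q) \<le> card (tree_outputs (f 0) q' \<union> tree_outputs (f 1) q')"
      using tree_outputs_Query[of a f q] IH Suc by (intro card_mono) auto
    also have "\<dots> \<le> 2 ^ q' + 2 ^ q'"
      using card_Un_le IH by (meson add_mono order_trans)
    finally show ?thesis
      using tree_outputs_Query[of a f q] IH Suc by (auto intro: finite_subset)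
  qed
qed

lemma card_run_tree_correct_le:
  assumes tgt: "inj_on tgt X"
    and \<phi>: "\<And>x. x \<in> X \<Longrightarrow> range (\<phi> x) \<subseteq> {0, 1}"
    and q: "\<And>x. x \<in> X \<Longrightarrow> nqueries (\<phi> x) t \<le> q"
  shows "card {x\<in>X. run_tree (\<phi> x) t = tgt x} \<le> 2 ^ q"
proof -
  have "card {x\<in>X. run_tree (\<phi> x) t = tgt x} \<le> card (tree_outputs t q)"
  proof (rule card_inj_on_le)
    show "inj_on tgt {x\<in>X. run_tree (\<phi> x) t = tgt x}" using tgt by (rule inj_on_subset) blast
    show "tgt ` {x\<in>X. run_tree (\<phi> x) t = tgt x} \<subseteq> tree_outputs t q"
    proof (rule image_subsetI)
      fix x assume "x \<in> {x\<in>X. run_tree (\<phi> x) t = tgt x}"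
      then show "tgt x \<in> tree_outputs t q"
        unfolding tree_outputs_def using \<phi> q by (intro CollectI exI[of _ "\<phi> x"]) auto
    qed
  qed (use finite_card_tree_outputs in blast)
  then show ?thesis using finite_card_tree_outputs order_trans by blast
qed

lemma sum_prob_le_of_card_le:
  fixes p :: "'a pmf" and E :: "'b \<Rightarrow> 'a set"
  assumes X: "finite X" and K: "\<And>t. t \<in> set_pmf p \<Longrightarrow> real (card {x\<in>X. t \<in> E x}) \<le> K"
  shows "(\<Sum>x\<in>X. measure_pmf.prob p (E x)) \<le> K"
proof -
  have count: "(\<Sum>x\<in>X. indicator (E x) t) = real (card {x\<in>X. t \<in> E x})" for t
    using X by (simp add: indicator_def sum.If_cases Int_def)
  have "(\<Sum>x\<in>X. measure_pmf.prob p (E x)) = measure_pmf.expectation p (\<lambda>t. \<Sum>x\<in>X. indicator (E x) t)"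
    by (subst Bochner_Integration.integral_sum)
      (auto intro!: measure_pmf.integrable_const_bound[where B = 1])
  also have "\<dots> \<le> K"
  proof (rule measure_pmf.integral_le_const)
    show "integrable (measure_pmf p) (\<lambda>t. \<Sum>x\<in>X. indicator (E x) t :: real)"
      by (intro Bochner_Integration.integrable_sum measure_pmf.integrable_const_bound[where B = 1]) auto
    show "AE t in measure_pmf p. (\<Sum>x\<in>X. indicator (E x) t) \<le> K"
      using K by (simp add: AE_measure_pmf_iff count)
  qed
  finally show ?thesis .
qed

lemma classical_hard_family_bound:
  assumes U: "Clo_eq_U ar opB" and M: "M \<ge> 2"
    and R: "solves_hkp_classical ar opB (Suc m) M q R"
  shows "2 * card (hard_family m) \<le> 3 * 2 ^ q"
proof -
  let ?X = "hard_family m" and ?p = "R {0, 1} (bit_ops opB)"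
  let ?tgt = "\<lambda>x. ker_on (pow_carrier (Suc m)) (bit_oracle x)"
  let ?E = "\<lambda>x. {t. run_tree (bit_oracle x) t = ?tgt x}"
  have inst: "hkp_instance ar opB (Suc m) M {0, 1} (bit_ops opB) (bit_oracle x)" if "x \<in> ?X" for x
    using hkp_instance_self_dual[OF U hard_family_self_dual[OF that] M] .
  have inj: "inj_on ?tgt ?X"
    using inj_on_ker_bit_oracle by (rule inj_on_subset) (auto intro: hard_family_self_dual)
  have "(\<Sum>x\<in>?X. measure_pmf.prob ?p (?E x)) \<le> 2 ^ q"
  proof (rule sum_prob_le_of_card_le[OF finite_hard_family])
    fix t assume "t \<in> set_pmf ?p"
    then have "nqueries (bit_oracle x) t \<le> q" if "x \<in> ?X" for x
      using R inst[OF that] by (auto simp: solves_hkp_classical_def)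
    then have "card {x\<in>?X. run_tree (bit_oracle x) t = ?tgt x} \<le> 2 ^ q"
      by (intro card_run_tree_correct_le[OF inj]) (auto simp: bit_oracle_def)
    then show "real (card {x\<in>?X. t \<in> ?E x}) \<le> 2 ^ q"
      by (simp add: of_nat_le_iff[symmetric])
  qed
  moreover have "(\<Sum>x\<in>?X. 2 / 3) \<le> (\<Sum>x\<in>?X. measure_pmf.prob ?p (?E x))"
    using R inst by (intro sum_mono) (auto simp: solves_hkp_classical_def)
  ultimately have "real (2 * card ?X) \<le> real (3 * 2 ^ q)" by simp
  then show ?thesis by (simp only: of_nat_le_iff)
qed

section \<open>Low-degree multilinear polynomials\<close>

definition monomials :: "'a set \<Rightarrow> nat \<Rightarrow> 'a set set" where
  "monomials A k = {T. T \<subseteq> A \<and> card T \<le> k}"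

(* The multilinear monomial prod_{a in T} x a in the Boolean variables x a *)
definition monomial :: "'a set \<Rightarrow> ('a \<Rightarrow> bool) \<Rightarrow> complex" where
  "monomial T x = of_bool (T \<subseteq> Collect x)"

definition low_degree :: "'a set \<Rightarrow> ('a \<Rightarrow> bool) set \<Rightarrow> nat \<Rightarrow> (('a \<Rightarrow> bool) \<Rightarrow> complex) \<Rightarrow> bool" where
  "low_degree A X k p \<longleftrightarrow> (\<exists>c. \<forall>x\<in>X. p x = (\<Sum>T\<in>monomials A k. c T * monomial T x))"

lemma finite_monomials: "finite A \<Longrightarrow> finite (monomials A k)"
  unfolding monomials_def by (rule finite_subset[of _ "Pow A"]) auto

lemma low_degree_cong:
  "low_degree A X k p \<Longrightarrow> (\<And>x. x \<in> X \<Longrightarrow> p x = p' x) \<Longrightarrow> low_degree A X k p'"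
  unfolding low_degree_def by simp

lemma low_degree_const:
  assumes "finite A" shows "low_degree A X k (\<lambda>x. v)"
proof -
  have "(\<Sum>T\<in>monomials A k. (if T = {} then v else 0) * monomial T x) = v * monomial {} x" for x
    using assms by (simp add: finite_monomials if_distrib[of "\<lambda>c. c * _"] cong: if_cong)
      (simp add: monomials_def)
  then show ?thesis
    unfolding low_degree_def by (intro exI[of _ "\<lambda>T. if T = {} then v else 0"]) (simp add: monomial_def)
qed

lemma low_degree_add:
  assumes "low_degree A X k p" "low_degree A X k p'"
  shows "low_degree A X k (\<lambda>x. p x + p' x)"
proof -
  obtain c c' where "\<forall>x\<in>X. p x = (\<Sum>T\<in>monomials A k. c T * monomial T x)"
    "\<forall>x\<in>X. p' x = (\<Sum>T\<in>monomials A k. c' T * monomial T x)"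
    using assms unfolding low_degree_def by blast
  then have "\<forall>x\<in>X. p x + p' x = (\<Sum>T\<in>monomials A k. (c T + c' T) * monomial T x)"
    by (simp add: distrib_right sum.distrib)
  then show ?thesis unfolding low_degree_def by (rule exI[of _ "\<lambda>T. c T + c' T"])
qed

lemma low_degree_scale:
  assumes "low_degree A X k p" shows "low_degree A X k (\<lambda>x. v * p x)"
proof -
  obtain c where "\<forall>x\<in>X. p x = (\<Sum>T\<in>monomials A k. c T * monomial T x)"
    using assms unfolding low_degree_def by blast
  then have "\<forall>x\<in>X. v * p x = (\<Sum>T\<in>monomials A k. (v * c T) * monomial T x)"
    by (simp add: sum_distrib_left mult.assoc)
  then show ?thesis unfolding low_degree_def by (rule exI[of _ "\<lambda>T. v * c T"])
qed

lemma low_degree_sum: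
  assumes "finite A" "\<And>j. j \<in> J \<Longrightarrow> low_degree A X k (p j)"
  shows "low_degree A X k (\<lambda>x. \<Sum>j\<in>J. p j x)"
  using assms(2)
proof (induction J rule: infinite_finite_induct)
  case (insert j J)
  then show ?case using low_degree_add[of A X k "p j"] by simp
qed (simp_all add: low_degree_const[OF assms(1)])

lemma low_degree_mono:
  assumes A: "finite A" and "k \<le> k'" and p: "low_degree A X k p"
  shows "low_degree A X k' p"
proof -
  obtain c where c: "\<forall>x\<in>X. p x = (\<Sum>T\<in>monomials A k. c T * monomial T x)"
    using p unfolding low_degree_def by blast
  have sub: "monomials A k \<subseteq> monomials A k'" using \<open>k \<le> k'\<close> by (auto simp: monomials_def)
  let ?c' = "\<lambda>T. if T \<in> monomials A k then c T else 0"
  have "(\<Sum>T\<in>monomials A k'. ?c' T * monomial T x) = (\<Sum>T\<in>monomials A k. c T * monomial T x)" for x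
    by (rule sum.mono_neutral_cong_right[OF finite_monomials[OF A] sub]) auto
  then have "\<forall>x\<in>X. p x = (\<Sum>T\<in>monomials A k'. ?c' T * monomial T x)" using c by simp
  then show ?thesis unfolding low_degree_def by (rule exI[of _ ?c'])
qed

lemma low_degree_mult_var:
  assumes A: "finite A" and a: "a \<in> A" and p: "low_degree A X k p"
  shows "low_degree A X (Suc k) (\<lambda>x. of_bool (x a) * p x)"
proof -
  obtain c where c: "\<forall>x\<in>X. p x = (\<Sum>T\<in>monomials A k. c T * monomial T x)"
    using p unfolding low_degree_def by blast
  have img: "insert a ` monomials A k \<subseteq> monomials A (Suc k)"
  proof
    fix T' assume "T' \<in> insert a ` monomials A k"
    then obtain T where T: "T \<in> monomials A k" "T' = insert a T" by blast
    then have "finite T" using A by (auto simp: monomials_def intro: finite_subset)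
    then show "T' \<in> monomials A (Suc k)"
      using T a by (auto simp: monomials_def card_insert_if)
  qed
  define c' where "c' T' = (\<Sum>T\<in>{T \<in> monomials A k. insert a T = T'}. c T)" for T'
  have "of_bool (x a) * p x = (\<Sum>T'\<in>monomials A (Suc k). c' T' * monomial T' x)" if "x \<in> X" for x
  proof -
    have "of_bool (x a) * p x = (\<Sum>T\<in>monomials A k. c T * monomial (insert a T) x)"
      using c that by (simp add: sum_distrib_left monomial_def mult.left_commute)
    also have "\<dots> = (\<Sum>T'\<in>monomials A (Suc k). \<Sum>T\<in>{T \<in> monomials A k. insert a T = T'}. c T * monomial (insert a T) x)"
      by (rule sum.group[OF finite_monomials[OF A] finite_monomials[OF A] img, symmetric])
    also have "\<dots> = (\<Sum>T'\<in>monomials A (Suc k). c' T' * monomial T' x)"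
      unfolding c'_def sum_distrib_right by (intro sum.cong) auto
    finally show ?thesis .
  qed
  then show ?thesis unfolding low_degree_def by blast
qed

lemma card_monomials:
  assumes "finite A" shows "card (monomials A k) = (\<Sum>j\<le>k. card A choose j)"
proof -
  have "monomials A k = (\<Union>j\<le>k. {T. T \<subseteq> A \<and> card T = j})" by (auto simp: monomials_def)
  moreover have "card (\<Union>j\<le>k. {T. T \<subseteq> A \<and> card T = j}) = (\<Sum>j\<le>k. card {T. T \<subseteq> A \<and> card T = j})"
    by (rule card_UN_disjoint) (use assms in auto)
  ultimately show ?thesis using n_subsets[OF assms] by simp
qed

lemma sum_binomial_le:
  fixes t V k :: nat
  assumes "t \<ge> 1"
  shows "t ^ V * (\<Sum>j\<le>k. V choose j) \<le> t ^ k * (t + 1) ^ V"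
proof -
  define f where "f j = (V choose j) * t ^ (V - j)" for j
  have "t ^ V * (\<Sum>j\<le>k. V choose j) = (\<Sum>j\<le>k. (V choose j) * t ^ V)"
    by (simp add: sum_distrib_left mult.commute)
  also have "\<dots> \<le> (\<Sum>j\<le>k. t ^ k * f j)"
  proof (rule sum_mono)
    fix j assume j: "j \<in> {..k}"
    show "(V choose j) * t ^ V \<le> t ^ k * f j"
    proof (cases "j \<le> V")
      case True
      have "t ^ V = t ^ j * t ^ (V - j)" using True by (simp flip: power_add)
      also have "\<dots> \<le> t ^ k * t ^ (V - j)"
        using j assms by (intro mult_right_mono power_increasing) auto
      finally have "(V choose j) * t ^ V \<le> (V choose j) * (t ^ k * t ^ (V - j))"
        by (rule mult_left_mono) simp
      then show ?thesis by (simp add: f_def mult_ac)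
    qed (simp add: f_def)
  qed
  also have "\<dots> \<le> t ^ k * (\<Sum>j\<le>V. f j)"
  proof -
    have "(\<Sum>j\<le>k. f j) = (\<Sum>j\<le>min k V. f j)"
      by (rule sum.mono_neutral_right) (auto simp: f_def)
    also have "\<dots> \<le> (\<Sum>j\<le>V. f j)" by (rule sum_mono2) auto
    finally show ?thesis by (simp add: sum_distrib_left[symmetric])
  qed
  also have "(\<Sum>j\<le>V. f j) = (t + 1) ^ V"
    using binomial_ring[of 1 t V] by (simp add: f_def add.commute)
  finally show ?thesis .
qed

section \<open>Orthonormal families and state discrimination\<close>

definition sqnorm :: "'s set \<Rightarrow> ('s \<Rightarrow> complex) \<Rightarrow> real" where
  "sqnorm S \<psi> = (\<Sum>s\<in>S. (cmod (\<psi> s))\<^sup>2)"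

definition cinner :: "'s set \<Rightarrow> ('s \<Rightarrow> complex) \<Rightarrow> ('s \<Rightarrow> complex) \<Rightarrow> complex" where
  "cinner S u v = (\<Sum>s\<in>S. cnj (u s) * v s)"

definition orthonormal :: "'s set \<Rightarrow> nat \<Rightarrow> (nat \<Rightarrow> 's \<Rightarrow> complex) \<Rightarrow> bool" where
  "orthonormal S m e \<longleftrightarrow> (\<forall>j<m. \<forall>k<m. cinner S (e j) (e k) = of_bool (j = k))"

definition in_span :: "'s set \<Rightarrow> nat \<Rightarrow> (nat \<Rightarrow> 's \<Rightarrow> complex) \<Rightarrow> ('s \<Rightarrow> complex) \<Rightarrow> bool" where
  "in_span S m e v \<longleftrightarrow> (\<exists>\<beta>. \<forall>s\<in>S. v s = (\<Sum>k<m. \<beta> k * e k s))"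

lemma of_real_sqnorm: "complex_of_real (sqnorm S \<psi>) = (\<Sum>s\<in>S. \<psi> s * cnj (\<psi> s))"
  unfolding sqnorm_def of_real_sum by (intro sum.cong refl complex_norm_square)

lemma cinner_self: "cinner S u u = complex_of_real (sqnorm S u)"
  unfolding cinner_def of_real_sqnorm by (simp add: mult.commute)

lemma cinner_cnj: "cinner S v u = cnj (cinner S u v)"
  unfolding cinner_def by (simp add: mult.commute)

lemma sqnorm_nonneg: "sqnorm S u \<ge> 0"
  unfolding sqnorm_def by (simp add: sum_nonneg)

lemma sqnorm_eq_0: "finite S \<Longrightarrow> sqnorm S u = 0 \<Longrightarrow> s \<in> S \<Longrightarrow> u s = 0"
  unfolding sqnorm_def using sum_nonneg_eq_0_iff[of S "\<lambda>s. (cmod (u s))\<^sup>2"] by auto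

lemma orthonormal_sqnorm: "orthonormal S m e \<Longrightarrow> k < m \<Longrightarrow> sqnorm S (e k) = 1"
  unfolding orthonormal_def using cinner_self[of S "e k"] by auto

lemma cinner_residual:
  assumes e: "orthonormal S m e" and j: "j < m"
  shows "cinner S (e j) (\<lambda>s. v s - (\<Sum>k<m. cinner S (e k) v * e k s)) = 0"
proof -
  have "cinner S (e j) (\<lambda>s. \<Sum>k<m. cinner S (e k) v * e k s) = (\<Sum>k<m. cinner S (e k) v * cinner S (e j) (e k))"
    unfolding cinner_def sum_distrib_left by (subst sum.swap) (simp add: mult_ac)
  also have "\<dots> = (\<Sum>k<m. if k = j then cinner S (e j) v else 0)"
    using e j unfolding orthonormal_def by (intro sum.cong) auto
  also have "\<dots> = cinner S (e j) v" using j by simp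
  finally show ?thesis by (simp add: cinner_def right_diff_distrib sum_subtractf)
qed

lemma orthonormal_extend:
  assumes e: "orthonormal S m e" and w: "\<And>j. j < m \<Longrightarrow> cinner S (e j) w = 0" "sqnorm S w = 1"
  shows "orthonormal S (Suc m) (e(m := w))"
  unfolding orthonormal_def
proof (intro allI impI)
  fix j k assume "j < Suc m" "k < Suc m"
  then consider "j < m" "k < m" | "j < m" "k = m" | "j = m" "k < m" | "j = m" "k = m" by linarith
  then show "cinner S ((e(m := w)) j) ((e(m := w)) k) = of_bool (j = k)"
  proof cases
    case 1
    then show ?thesis using e by (simp add: orthonormal_def)
  next
    case 2
    then show ?thesis using w(1)[of j] by simp
  next
    case 3
    then show ?thesis using w(1)[of k] cinner_cnj[of S w "e k"] by simp
  next
    case 4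
    then show ?thesis using w(2) cinner_self[of S w] by simp
  qed
qed

lemma in_span_extend:
  assumes "in_span S m e u" shows "in_span S (Suc m) (e(m := w)) u"
proof -
  obtain \<beta> where "\<forall>s\<in>S. u s = (\<Sum>k<m. \<beta> k * e k s)" using assms unfolding in_span_def by blast
  then have "\<forall>s\<in>S. u s = (\<Sum>k<Suc m. (if k < m then \<beta> k else 0) * (e(m := w)) k s)" by simp
  then show ?thesis unfolding in_span_def by (rule exI[of _ "\<lambda>k. if k < m then \<beta> k else 0"])
qed

lemma cinner_divide_right: "cinner S u (\<lambda>s. w s / c) = cinner S u w / c"
  unfolding cinner_def by (simp add: sum_divide_distrib)

lemma cinner_divide: "cinner S (\<lambda>s. w s / c) (\<lambda>s. w s / c) = cinner S w w / (cnj c * c)"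
  unfolding cinner_def by (simp add: sum_divide_distrib)

lemma gram_schmidt_step:
  assumes S: "finite S" and e: "orthonormal S m e"
  obtains m' e' where "m' \<le> Suc m" "orthonormal S m' e'" "in_span S m' e' v"
    "\<And>u. in_span S m e u \<Longrightarrow> in_span S m' e' u"
proof -
  define w where "w = (\<lambda>s. v s - (\<Sum>k<m. cinner S (e k) v * e k s))"
  show ?thesis
  proof (cases "sqnorm S w = 0")
    case True
    have "v s = (\<Sum>k<m. cinner S (e k) v * e k s)" if "s \<in> S" for s
      using sqnorm_eq_0[OF S True that] by (simp add: w_def)
    then have "in_span S m e v"
      unfolding in_span_def by (intro exI[of _ "\<lambda>k. cinner S (e k) v"]) blast
    with e show ?thesis by (intro that[of m e]) auto
  next
    case False
    define c where "c = complex_of_real (sqrt (sqnorm S w))"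
    have "sqnorm S w > 0" using False sqnorm_nonneg[of S w] by linarith
    then have c: "c \<noteq> 0" "cnj c * c = complex_of_real (sqnorm S w)"
      by (simp_all add: c_def flip: of_real_mult)
    have "orthonormal S (Suc m) (e(m := (\<lambda>s. w s / c)))"
    proof (rule orthonormal_extend[OF e])
      show "cinner S (e j) (\<lambda>s. w s / c) = 0" if "j < m" for j
        using cinner_residual[OF e that, of v] by (simp add: cinner_divide_right w_def)
      show "sqnorm S (\<lambda>s. w s / c) = 1"
        using False c cinner_divide[of S w c] cinner_self[of S w] cinner_self[of S "\<lambda>s. w s / c"] by simp
    qed
    moreover have "in_span S (Suc m) (e(m := (\<lambda>s. w s / c))) v"
      unfolding in_span_def using c
      by (intro exI[of _ "\<lambda>k. if k < m then cinner S (e k) v else c"]) (simp add: w_def)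
    ultimately show ?thesis
      using in_span_extend by (intro that[of "Suc m" "e(m := (\<lambda>s. w s / c))"]) auto
  qed
qed

lemma gram_schmidt:
  assumes S: "finite S" and I: "finite I"
  obtains m e where "m \<le> card I" "orthonormal S m e" "\<And>i. i \<in> I \<Longrightarrow> in_span S m e (v i)"
proof -
  have "\<exists>m e. m \<le> card I \<and> orthonormal S m e \<and> (\<forall>i\<in>I. in_span S m e (v i))"
    using I
  proof (induction I rule: finite_induct)
    case empty
    show ?case by (intro exI[of _ 0]) (simp add: orthonormal_def)
  next
    case (insert i I)
    then obtain m e where "m \<le> card I" "orthonormal S m e" "\<forall>i\<in>I. in_span S m e (v i)" by blast
    moreover obtain m' e' where "m' \<le> Suc m" "orthonormal S m' e'" "in_span S m' e' (v i)"
      "\<And>u. in_span S m e u \<Longrightarrow> in_span S m' e' u"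
      using gram_schmidt_step[OF S \<open>orthonormal S m e\<close>, where v = "v i"] by blast
    ultimately show ?case using insert by (intro exI[of _ m'] exI[of _ e']) auto
  qed
  then show ?thesis using that by blast
qed

lemma sqnorm_in_span:
  assumes e: "orthonormal S m e" and u: "\<And>s. s \<in> S \<Longrightarrow> u s = (\<Sum>k<m. \<beta> k * e k s)"
  shows "sqnorm S u = (\<Sum>k<m. (cmod (\<beta> k))\<^sup>2)"
proof -
  have "complex_of_real (sqnorm S u) = (\<Sum>s\<in>S. \<Sum>j<m. \<Sum>k<m. \<beta> j * cnj (\<beta> k) * (cnj (e k s) * e j s))"
    unfolding of_real_sqnorm using u by (intro sum.cong refl) (simp add: sum_product mult_ac)
  also have "\<dots> = (\<Sum>j<m. \<Sum>s\<in>S. \<Sum>k<m. \<beta> j * cnj (\<beta> k) * (cnj (e k s) * e j s))"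
    by (rule sum.swap)
  also have "\<dots> = (\<Sum>j<m. \<Sum>k<m. \<Sum>s\<in>S. \<beta> j * cnj (\<beta> k) * (cnj (e k s) * e j s))"
    by (intro sum.cong refl sum.swap)
  also have "\<dots> = (\<Sum>j<m. \<Sum>k<m. \<beta> j * cnj (\<beta> k) * cinner S (e k) (e j))"
    unfolding cinner_def sum_distrib_left by (intro sum.cong refl)
  also have "\<dots> = (\<Sum>j<m. \<beta> j * cnj (\<beta> j))"
  proof (rule sum.cong[OF refl])
    fix j assume "j \<in> {..<m}"
    then have "(\<Sum>k<m. \<beta> j * cnj (\<beta> k) * cinner S (e k) (e j)) = (\<Sum>k<m. if k = j then \<beta> j * cnj (\<beta> j) else 0)"
      using e by (intro sum.cong refl) (auto simp: orthonormal_def)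
    then show "(\<Sum>k<m. \<beta> j * cnj (\<beta> k) * cinner S (e k) (e j)) = \<beta> j * cnj (\<beta> j)"
      using \<open>j \<in> {..<m}\<close> by simp
  qed
  also have "\<dots> = complex_of_real (\<Sum>k<m. (cmod (\<beta> k))\<^sup>2)"
    unfolding of_real_sum by (intro sum.cong refl complex_norm_square[symmetric])
  finally show ?thesis using of_real_eq_iff by blast
qed

lemma cmod_sum_mult_sq_le:
  "(cmod (\<Sum>k\<in>K. \<beta> k * w k))\<^sup>2 \<le> (\<Sum>k\<in>K. (cmod (\<beta> k))\<^sup>2) * (\<Sum>k\<in>K. (cmod (w k))\<^sup>2)"
proof -
  have "cmod (\<Sum>k\<in>K. \<beta> k * w k) \<le> (\<Sum>k\<in>K. cmod (\<beta> k) * cmod (w k))"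
    using norm_sum[of "\<lambda>k. \<beta> k * w k" K] by (simp add: norm_mult)
  then have "(cmod (\<Sum>k\<in>K. \<beta> k * w k))\<^sup>2 \<le> (\<Sum>k\<in>K. cmod (\<beta> k) * cmod (w k))\<^sup>2"
    by (simp add: power_mono)
  also have "\<dots> \<le> (\<Sum>k\<in>K. (cmod (\<beta> k))\<^sup>2) * (\<Sum>k\<in>K. (cmod (w k))\<^sup>2)"
    by (rule Cauchy_Schwarz_ineq_sum)
  finally show ?thesis .
qed

lemma sum_success_le_orthonormal:
  assumes S: "finite S" and X: "finite X" and e: "orthonormal S m e"
    and \<psi>: "\<And>x s. x \<in> X \<Longrightarrow> s \<in> S \<Longrightarrow> \<psi> x s = (\<Sum>k<m. \<beta> x k * e k s)"
    and norm: "\<And>x. x \<in> X \<Longrightarrow> sqnorm S (\<psi> x) \<le> 1"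
    and tgt: "inj_on tgt X"
  shows "(\<Sum>x\<in>X. \<Sum>s\<in>{s\<in>S. out s = tgt x}. (cmod (\<psi> x s))\<^sup>2) \<le> m"
proof -
  (* |psi x s|^2 <= K s by Cauchy-Schwarz; each s is counted for at most one x; and sum K = m *)
  define K where "K s = (\<Sum>k<m. (cmod (e k s))\<^sup>2)" for s
  have K: "K s \<ge> 0" for s unfolding K_def by (simp add: sum_nonneg)
  have pointwise: "(cmod (\<psi> x s))\<^sup>2 \<le> K s" if x: "x \<in> X" and s: "s \<in> S" for x s
  proof -
    have "(cmod (\<psi> x s))\<^sup>2 \<le> sqnorm S (\<psi> x) * K s"
      using cmod_sum_mult_sq_le[where \<beta> = "\<beta> x" and w = "\<lambda>k. e k s" and K = "{..<m}"] sqnorm_in_span[OF e \<psi>[OF x]]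
      unfolding K_def \<psi>[OF x s] by simp
    also have "\<dots> \<le> K s" using norm[OF x] K mult_right_mono[of _ 1 "K s"] by simp
    finally show ?thesis .
  qed
  have at_most_one: "real (card {x\<in>X. out s = tgt x}) \<le> 1" for s
    using tgt X by (simp add: card_le_Suc0_iff_eq inj_on_def)
  have "(\<Sum>x\<in>X. \<Sum>s\<in>{s\<in>S. out s = tgt x}. (cmod (\<psi> x s))\<^sup>2) \<le> (\<Sum>x\<in>X. \<Sum>s\<in>{s\<in>S. out s = tgt x}. K s)"
    using pointwise by (intro sum_mono) auto
  also have "\<dots> = (\<Sum>x\<in>X. \<Sum>s\<in>S. if out s = tgt x then K s else 0)"
    using S by (simp add: sum.inter_filter)
  also have "\<dots> = (\<Sum>s\<in>S. \<Sum>x\<in>X. if out s = tgt x then K s else 0)"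
    by (rule sum.swap)
  also have "\<dots> = (\<Sum>s\<in>S. real (card {x\<in>X. out s = tgt x}) * K s)"
    using X by (simp add: sum.inter_filter[symmetric])
  also have "\<dots> \<le> (\<Sum>s\<in>S. K s)"
    using at_most_one K by (intro sum_mono) (simp add: mult_left_le_one_le)
  also have "\<dots> = (\<Sum>k<m. sqnorm S (e k))"
    unfolding K_def sqnorm_def by (rule sum.swap)
  also have "\<dots> = m" using orthonormal_sqnorm[OF e] by simp
  finally show ?thesis .
qed

lemma sum_success_le_card:
  assumes S: "finite S" and X: "finite X" and I: "finite I"
    and \<psi>: "\<And>x s. x \<in> X \<Longrightarrow> s \<in> S \<Longrightarrow> \<psi> x s = (\<Sum>i\<in>I. v i s * f x i)"
    and norm: "\<And>x. x \<in> X \<Longrightarrow> sqnorm S (\<psi> x) \<le> 1"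
    and tgt: "inj_on tgt X"
  shows "(\<Sum>x\<in>X. \<Sum>s\<in>{s\<in>S. out s = tgt x}. (cmod (\<psi> x s))\<^sup>2) \<le> card I"
proof -
  obtain m e where m: "m \<le> card I" and e: "orthonormal S m e" and span: "\<And>i. i \<in> I \<Longrightarrow> in_span S m e (v i)"
    using gram_schmidt[OF S I] by blast
  obtain b where b: "\<And>i s. i \<in> I \<Longrightarrow> s \<in> S \<Longrightarrow> v i s = (\<Sum>k<m. b i k * e k s)"
    using span unfolding in_span_def by metis
  have "\<psi> x s = (\<Sum>k<m. (\<Sum>i\<in>I. f x i * b i k) * e k s)" if "x \<in> X" "s \<in> S" for x s
  proof -
    have "\<psi> x s = (\<Sum>i\<in>I. \<Sum>k<m. f x i * b i k * e k s)"
      using that by (simp add: \<psi> b sum_distrib_left sum_distrib_right mult_ac)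
    also have "\<dots> = (\<Sum>k<m. (\<Sum>i\<in>I. f x i * b i k) * e k s)"
      by (subst sum.swap) (simp add: sum_distrib_right)
    finally show ?thesis .
  qed
  then have "(\<Sum>x\<in>X. \<Sum>s\<in>{s\<in>S. out s = tgt x}. (cmod (\<psi> x s))\<^sup>2) \<le> m"
    by (rule sum_success_le_orthonormal[OF S X e _ norm tgt])
  then show ?thesis using m by linarith
qed

section \<open>Quantum query algorithms\<close>

lemma add_mod_inverse:
  fixes y :: nat
  assumes "y < M" "c + c' = M"
  shows "((y + c) mod M + c') mod M = y"
proof -
  have "((y + c) mod M + c') mod M = (y + M) mod M"
    using assms(2) by (simp add: mod_add_left_eq add.assoc)
  then show ?thesis using assms(1) by simp
qed

lemma finite_qbasis_set: "finite (qbasis_set n M d)"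
  by (simp add: qbasis_set_def finite_pow_carrier)

lemma sqnorm_apply_op:
  assumes S: "finite S" and U: "unitary_on S U"
  shows "sqnorm S (apply_op S U \<psi>) = sqnorm S \<psi>"
proof -
  have "complex_of_real (sqnorm S (apply_op S U \<psi>))
      = (\<Sum>j\<in>S. \<Sum>k\<in>S. \<psi> j * cnj (\<psi> k) * cnj (\<Sum>i\<in>S. cnj (U i j) * U i k))"
  proof -
    have "complex_of_real (sqnorm S (apply_op S U \<psi>))
        = (\<Sum>i\<in>S. \<Sum>j\<in>S. \<Sum>k\<in>S. \<psi> j * cnj (\<psi> k) * (U i j * cnj (U i k)))"
      unfolding of_real_sqnorm apply_op_def by (intro sum.cong refl) (simp add: sum_product mult_ac)
    also have "\<dots> = (\<Sum>j\<in>S. \<Sum>k\<in>S. \<Sum>i\<in>S. \<psi> j * cnj (\<psi> k) * (U i j * cnj (U i k)))"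
      by (subst sum.swap) (intro sum.cong refl sum.swap)
    finally show ?thesis by (simp add: sum_distrib_left mult.commute)
  qed
  also have "\<dots> = (\<Sum>j\<in>S. \<Sum>k\<in>S. if j = k then \<psi> j * cnj (\<psi> k) else 0)"
    using U by (intro sum.cong refl) (simp add: unitary_on_def)
  also have "\<dots> = complex_of_real (sqnorm S \<psi>)"
    using S by (simp add: of_real_sqnorm)
  finally show ?thesis using of_real_eq_iff by blast
qed

lemma sqnorm_query_op:
  assumes M: "M > 0"
  shows "sqnorm (qbasis_set n M d) (query_op M \<phi> \<psi>) = sqnorm (qbasis_set n M d) \<psi>"
proof -
  let ?S = "qbasis_set n M d"
  define g :: "qbasis \<Rightarrow> qbasis" where "g = (\<lambda>(a, y, w). (a, (y + (M - \<phi> a mod M)) mod M, w))"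
  define h :: "qbasis \<Rightarrow> qbasis" where "h = (\<lambda>(a, y, w). (a, (y + \<phi> a mod M) mod M, w))"
  have "bij_betw g ?S ?S"
  proof (rule bij_betw_byWitness[where f' = h])
    have r: "M - \<phi> a mod M + \<phi> a mod M = M" "\<phi> a mod M + (M - \<phi> a mod M) = M" for a
      using M by (simp_all add: order_less_imp_le)
    show "\<forall>s\<in>?S. h (g s) = s" "\<forall>s\<in>?S. g (h s) = s"
      using add_mod_inverse[OF _ r(1)] add_mod_inverse[OF _ r(2)]
      by (auto simp: g_def h_def qbasis_set_def)
    show "g ` ?S \<subseteq> ?S" "h ` ?S \<subseteq> ?S" using M by (auto simp: g_def h_def qbasis_set_def)
  qed
  moreover have "query_op M \<phi> \<psi> = \<psi> \<circ> g" by (auto simp: query_op_def g_def)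
  ultimately show ?thesis
    unfolding sqnorm_def using sum.reindex_bij_betw[of g ?S ?S "\<lambda>s. (cmod (\<psi> s))\<^sup>2"] by simp
qed

lemma sqnorm_qrun:
  assumes "M > 0" "\<forall>U\<in>set Us. unitary_on (qbasis_set n M d) U"
  shows "sqnorm (qbasis_set n M d) (qrun (qbasis_set n M d) M \<phi> Us \<psi>)
       = sqnorm (qbasis_set n M d) \<psi>"
  using assms(2)
proof (induction Us arbitrary: \<psi> rule: induct_list012)
  case (2 U)
  then show ?case by (simp add: sqnorm_apply_op finite_qbasis_set)
next
  case (3 U V Us)
  then show ?case by (simp add: sqnorm_apply_op sqnorm_query_op finite_qbasis_set assms(1))
qed simp

lemma sqnorm_init_state:
  assumes "M \<ge> 1" "d \<ge> 1"
  shows "sqnorm (qbasis_set n M d) (init_state n) = 1"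
proof -
  have "(replicate n False, 0, 0) \<in> qbasis_set n M d"
    using assms by (simp add: qbasis_set_def replicate_in_pow_carrier)
  then show ?thesis
    by (simp add: sqnorm_def init_state_def finite_qbasis_set if_distrib[of "\<lambda>z. (cmod z)\<^sup>2"] cong: if_cong)
qed

lemma low_degree_apply_op:
  assumes "finite A" "\<And>s. low_degree A X k (\<lambda>x. \<psi> x s)"
  shows "low_degree A X k (\<lambda>x. apply_op S U (\<psi> x) i)"
proof (cases "i \<in> S")
  case True
  have "low_degree A X k (\<lambda>x. \<Sum>j\<in>S. U i j * \<psi> x j)"
    using assms by (intro low_degree_sum low_degree_scale)
  then show ?thesis using True by (simp add: apply_op_def)
next
  case False
  then show ?thesis using low_degree_const[OF assms(1), of X k 0] by (simp add: apply_op_def)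
qed

(* With answers in {0, 1}, each amplitude after a query is affine in the single variable x a. *)
lemma query_op_bit_oracle:
  assumes "M \<ge> 2"
  shows "query_op M (bit_oracle x) \<psi> (a, y, w) =
    \<psi> (a, y mod M, w) + of_bool (x a) * (\<psi> (a, (y + (M - 1)) mod M, w) - \<psi> (a, y mod M, w))"
  using assms by (cases "x a") (simp_all add: query_op_def bit_oracle_def)

lemma low_degree_query_op:
  assumes A: "finite A" and M: "M \<ge> 2" and X: "\<And>x a. x \<in> X \<Longrightarrow> x a \<Longrightarrow> a \<in> A"
    and \<psi>: "\<And>s. low_degree A X k (\<lambda>x. \<psi> x s)"
  shows "low_degree A X (Suc k) (\<lambda>x. query_op M (bit_oracle x) (\<psi> x) s)"
proof -
  obtain a y w where s: "s = (a, y, w)" by (cases s)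
  let ?s0 = "(a, y mod M, w)" and ?s1 = "(a, (y + (M - 1)) mod M, w)"
  have low0: "low_degree A X (Suc k) (\<lambda>x. \<psi> x ?s0)" by (rule low_degree_mono[OF A _ \<psi>]) simp
  show ?thesis
  proof (cases "a \<in> A")
    case True
    have "low_degree A X (Suc k) (\<lambda>x. of_bool (x a) * (\<psi> x ?s1 + (-1) * \<psi> x ?s0))"
      using A True \<psi> by (intro low_degree_mult_var low_degree_add low_degree_scale)
    from low_degree_add[OF low0 this] show ?thesis
      by (rule low_degree_cong) (simp add: s query_op_bit_oracle[OF M])
  next
    case False
    show ?thesis
      using low0 by (rule low_degree_cong) (use X False in \<open>auto simp: s query_op_bit_oracle[OF M]\<close>)
  qed
qed

lemma low_degree_qrun:
  assumes A: "finite A" and M: "M \<ge> 2" and X: "\<And>x a. x \<in> X \<Longrightarrow> x a \<Longrightarrow> a \<in> A"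
    and \<psi>: "\<And>s. low_degree A X k (\<lambda>x. \<psi> x s)"
  shows "low_degree A X (k + (length Us - 1)) (\<lambda>x. qrun S M (bit_oracle x) Us (\<psi> x) s)"
  using \<psi>
proof (induction Us arbitrary: \<psi> k s rule: induct_list012)
  case (2 U)
  then show ?case by (simp add: low_degree_apply_op[OF A])
next
  case (3 U V Us)
  have "low_degree A X (Suc k) (\<lambda>x. query_op M (bit_oracle x) (apply_op S U (\<psi> x)) s)" for s
    using "3.prems" by (intro low_degree_query_op[OF A M X] low_degree_apply_op[OF A])
  from "3.IH"(2)[OF this] show ?case by simp
qed simp

lemma qrun_monomial_expansion:
  assumes M: "M \<ge> 2" and Us: "length Us = Suc q" and X: "\<And>x a. x \<in> X \<Longrightarrow> x a \<Longrightarrow> a \<in> pow_carrier n"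
  shows "\<exists>cf. \<forall>s. \<forall>x\<in>X.
    qrun S M (bit_oracle x) Us (init_state n) s = (\<Sum>T\<in>monomials (pow_carrier n) q. cf s T * monomial T x)"
proof -
  have "low_degree (pow_carrier n) X (0 + (length Us - 1)) (\<lambda>x. qrun S M (bit_oracle x) Us (init_state n) s)" for s
    by (rule low_degree_qrun[OF finite_pow_carrier M X low_degree_const[OF finite_pow_carrier]])
  then have "\<forall>s. \<exists>c. \<forall>x\<in>X. qrun S M (bit_oracle x) Us (init_state n) s
      = (\<Sum>T\<in>monomials (pow_carrier n) q. c T * monomial T x)"
    using Us by (simp add: low_degree_def)
  then show ?thesis by (rule choice)
qed

lemma quantum_hard_family_bound:
  assumes U: "Clo_eq_U ar opB" and M: "M \<ge> 2"
    and Q: "solves_hkp_quantum ar opB (Suc m) M q Q"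
  shows "2 * card (hard_family m) \<le> 3 * card (monomials (pow_carrier (Suc m)) q)"
proof -
  let ?X = "hard_family m" and ?A = "pow_carrier (Suc m)"
  let ?tgt = "\<lambda>x. ker_on ?A (bit_oracle x)"
  obtain d Us out where Qd: "Q {0, 1} (bit_ops opB) = (d, Us, out)" by (metis prod_cases3)
  define S where "S = qbasis_set (Suc m) M d"
  define \<psi> where "\<psi> x = qrun S M (bit_oracle x) Us (init_state (Suc m))" for x
  have inst: "hkp_instance ar opB (Suc m) M {0, 1} (bit_ops opB) (bit_oracle x)" if "x \<in> ?X" for x
    using hkp_instance_self_dual[OF U hard_family_self_dual[OF that] M] .
  have X: "a \<in> ?A" if "x \<in> ?X" "x a" for x a
    using hard_family_self_dual[OF that(1)] that(2) by (simp add: self_dual_def)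
  have "qalg_wf (Suc m) M q (Q {0, 1} (bit_ops opB)) \<and>
      2 / 3 \<le> qsuccess (Suc m) M (Q {0, 1} (bit_ops opB)) (bit_oracle x) (?tgt x)" if "x \<in> ?X" for x
    by (rule Q[unfolded solves_hkp_quantum_def, rule_format, OF inst[OF that]])
  note sol = this[unfolded Qd]
  have success: "2 / 3 \<le> (\<Sum>s\<in>{s\<in>S. out s = ?tgt x}. (cmod (\<psi> x s))\<^sup>2)" if "x \<in> ?X" for x
    using sol[OF that] by (simp only: qsuccess_def S_def \<psi>_def Let_def prod.case)
  have "self_dual_extension m {} \<in> ?X" by (simp add: hard_family_def)
  then have "qalg_wf (Suc m) M q (d, Us, out)" using sol by blast
  then have d: "d \<ge> 1" and Us: "length Us = Suc q" "\<forall>U\<in>set Us. unitary_on S U"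
    by (auto simp: qalg_wf_def S_def)
  have norm: "sqnorm S (\<psi> x) \<le> 1" for x
    using sqnorm_qrun[of M Us] sqnorm_init_state[of M d] M d Us by (simp add: \<psi>_def S_def)
  have "\<exists>cf. \<forall>s. \<forall>x\<in>?X. \<psi> x s = (\<Sum>T\<in>monomials ?A q. cf s T * monomial T x)"
    unfolding \<psi>_def by (rule qrun_monomial_expansion[OF M Us(1) X])
  then obtain cf where cf: "\<forall>s. \<forall>x\<in>?X. \<psi> x s = (\<Sum>T\<in>monomials ?A q. cf s T * monomial T x)"
    by blast
  have "(\<Sum>x\<in>?X. \<Sum>s\<in>{s\<in>S. out s = ?tgt x}. (cmod (\<psi> x s))\<^sup>2) \<le> card (monomials ?A q)"
  proof (rule sum_success_le_card[where v = "\<lambda>T s. cf s T"])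
    show "finite S" by (simp add: S_def finite_qbasis_set)
    show "finite (monomials ?A q)" by (simp add: finite_monomials finite_pow_carrier)
    show "inj_on ?tgt ?X"
      using inj_on_ker_bit_oracle by (rule inj_on_subset) (auto intro: hard_family_self_dual)
    show "sqnorm S (\<psi> x) \<le> 1" for x by (rule norm)
  qed (use finite_hard_family cf in auto)
  moreover have "(\<Sum>x\<in>?X. 2 / 3) \<le> (\<Sum>x\<in>?X. \<Sum>s\<in>{s\<in>S. out s = ?tgt x}. (cmod (\<psi> x s))\<^sup>2)"
    using success by (rule sum_mono)
  ultimately have "real (2 * card ?X) \<le> real (3 * card (monomials ?A q))" by simp
  then show ?thesis by (simp only: of_nat_le_iff)
qed

lemma classical_count_linear:
  fixes W q :: nat
  assumes "W \<ge> 1" "2 * 2 ^ (W - 1) \<le> 3 * (2::nat) ^ q"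
  shows "W \<le> q + 1"
proof -
  have "(2::nat) ^ W \<le> 3 * 2 ^ q" using assms by (cases W) auto
  also have "\<dots> < 2 ^ (q + 2)" by simp
  finally show ?thesis using power_less_imp_less_exp[of "2::nat" W "q + 2"] by simp
qed

lemma nine_mult_6561_pow_less: "W \<ge> 10 \<Longrightarrow> 9 * 6561 ^ W < (8192::nat) ^ W"
proof (induction W rule: dec_induct)
  case (step W)
  have "9 * 6561 ^ Suc W = 6561 * (9 * (6561::nat) ^ W)" by simp
  also have "\<dots> < 6561 * 8192 ^ W" using step.IH by simp
  also have "\<dots> \<le> 8192 ^ Suc W" by simp
  finally show ?case .
qed simp

lemma quantum_count_linear:
  fixes W q :: nat
  assumes W: "W \<ge> 10" and count: "2 ^ W * 8 ^ (2 * W) \<le> 3 * 8 ^ q * (9::nat) ^ (2 * W)"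
  shows "W \<le> 6 * q"
proof (rule ccontr)
  (* bounding 8^q by 2^(W/2) needs a square root, so the hypothesis is squared *)
  have square_pow: "(a ^ k)\<^sup>2 = (a\<^sup>2) ^ k" for a k :: nat by (simp add: power_mult[symmetric] mult.commute)
  assume "\<not> W \<le> 6 * q"
  then have "(2::nat) ^ (6 * q + 1) \<le> 2 ^ W" by (intro power_increasing) auto
  then have q: "2 * 64 ^ q \<le> (2::nat) ^ W" by (simp add: power_mult)
  have "2 ^ W * 8192 ^ W = (2 ^ W * 8 ^ (2 * W) :: nat)\<^sup>2"
    by (simp add: power_mult power_mult_distrib[symmetric] square_pow)
  also have "\<dots> \<le> (3 * 8 ^ q * 9 ^ (2 * W))\<^sup>2" using count by (rule power_mono) simp
  also have "\<dots> = 9 * 64 ^ q * 6561 ^ W" by (simp add: power_mult_distrib power_mult square_pow)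
  finally have "2 * (2 ^ W * 8192 ^ W) \<le> 9 * (2 * 64 ^ q) * (6561 ^ W :: nat)" by simp
  also have "\<dots> \<le> 9 * 2 ^ W * 6561 ^ W" using q by simp
  finally have "2 * 8192 ^ W \<le> (9 * 6561 ^ W :: nat)" by simp
  then show False using nine_mult_6561_pow_less[OF W] by simp
qed

lemma classical_query_lower_bound:
  assumes "Clo_eq_U ar opB" "M \<ge> 2" "m \<ge> 4" "solves_hkp_classical ar opB (Suc m) M q R"
  shows "2 ^ m \<le> 6 * q"
proof -
  have W: "(2::nat) ^ m \<ge> 16" using power_increasing[OF \<open>m \<ge> 4\<close>, of "2::nat"] by simp
  have "2 * 2 ^ (2 ^ m - 1) \<le> 3 * (2::nat) ^ q"
    using classical_hard_family_bound[OF assms(1,2,4)] by (simp add: card_hard_family)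
  then have "2 ^ m \<le> q + 1" using W by (intro classical_count_linear) auto
  then show ?thesis using W by linarith
qed

lemma quantum_query_lower_bound:
  assumes "Clo_eq_U ar opB" "M \<ge> 2" "m \<ge> 4" "solves_hkp_quantum ar opB (Suc m) M q Q"
  shows "2 ^ m \<le> 6 * q"
proof -
  define W :: nat where "W = 2 ^ m"
  let ?N = "card (monomials (pow_carrier (Suc m)) q)"
  have W: "W \<ge> 16" using power_increasing[OF \<open>m \<ge> 4\<close>, of "2::nat"] by (simp add: W_def)
  have N: "8 ^ (2 * W) * ?N \<le> 8 ^ q * 9 ^ (2 * W)"
    using sum_binomial_le[of 8 "2 * W" q]
    by (simp add: card_monomials finite_pow_carrier card_pow_carrier W_def)
  have "2 ^ W \<le> 3 * ?N"
    using quantum_hard_family_bound[OF assms(1,2,4)] W by (cases W) (simp_all add: card_hard_family W_def)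
  then have "2 ^ W * 8 ^ (2 * W) \<le> 3 * (8 ^ (2 * W) * ?N)" by (simp add: mult_ac)
  also have "\<dots> \<le> 3 * (8 ^ q * 9 ^ (2 * W))" using N by simp
  finally have "2 ^ W * 8 ^ (2 * W) \<le> 3 * 8 ^ q * (9::nat) ^ (2 * W)" by (simp add: mult.assoc)
  then show ?thesis using W unfolding W_def by (intro quantum_count_linear) auto
qed

theorem lemma5p7:
  fixes ar :: "'i \<Rightarrow> nat" and opB :: "'i \<Rightarrow> bool list \<Rightarrow> bool"
  assumes "Clo_eq_U ar opB"
  shows "\<exists>c>0. \<exists>N0. \<forall>n\<ge>N0. \<forall>M\<ge>2. \<forall>q.
           ((\<exists>R. solves_hkp_classical ar opB n M q R) \<or> (\<exists>Q. solves_hkp_quantum ar opB n M q Q))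
           \<longrightarrow> c * 2 ^ n \<le> real q"
proof (intro exI[of _ "1 / 12 :: real"] conjI exI[of _ "5 :: nat"] allI impI)
  fix n M q :: nat
  assume n: "5 \<le> n" and M: "2 \<le> M"
    and solved: "(\<exists>R. solves_hkp_classical ar opB n M q R) \<or> (\<exists>Q. solves_hkp_quantum ar opB n M q Q)"
  obtain m where m: "n = Suc m" "4 \<le> m" using n by (cases n) auto
  have "2 ^ m \<le> 6 * q"
    using solved classical_query_lower_bound[OF assms M m(2)] quantum_query_lower_bound[OF assms M m(2)]
    unfolding m(1) by blast
  then have "real (2 ^ m) \<le> real (6 * q)" by (simp only: of_nat_le_iff)
  then show "1 / 12 * 2 ^ n \<le> real q" by (simp add: m(1))
qed simp

end
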